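(* Let $t$ be a normal linear lambda term with $R$-coloring $\pi$. Then the size $|\pi|$ equals the total number of leaves (occurrences of $\_$ as a leaf) in its underlying lambda skeleton; explicitly $|\pi| = |t|$, where $|\lambda x.t| = |t|$, $|x| = 1$ and $|t(u)| = |t|+|u|$. On the other hand, if $t$ is a neutral linear lambda term with $B$-coloring $\pi$, then $|\pi| = |t|-1$.
   Context: Lambda skeletons: graded sets $\mathrm{SLam}(i)$, least such that $\_ \in \mathrm{SLam}(1)$ (a leaf); $p\in\mathrm{SLam}(j), q\in\mathrm{SLam}(k)\Rightarrow p(q)\in\mathrm{SLam}(j+k)$; $p\in\mathrm{SLam}(i+1)\Rightarrow \lambda\_.p\in\mathrm{SLam}(i)$. A linear lambda term with free variables $\Gamma$ decorating $p$, written $[\Gamma]t\in\Lambda_1(p)$, is defined by the rules: $[x]x\in\Lambda_1(\_)$; from $[\Gamma]t\in\Lambda_1(p)$, $[\Delta]u\in\Lambda_1(q)$ infer $[\Gamma,\Delta]t(u)\in\Lambda_1(p(q))$; from $[x,\Gamma]t\in\Lambda_1(p)$ infer $[\Gamma]\lambda x.t\in\Lambda_1(\lambda\_.p)$; from $[\Gamma,y,x,\Delta]t\in\Lambda_1(p)$ infer $[\Gamma,x,y,\Delta]t\in\Lambda_1(p)$. Define $\mathrm{SNeu}(i)$, $\mathrm{SNF}(i)$ by the rules (v) $\_\in\mathrm{SNeu}(1)$; (a) $p\in\mathrm{SNeu}(j)$, $q\in\mathrm{SNF}(k)\Rightarrow p(q)\in\mathrm{SNeu}(j+k)$; (s) $p\in\mathrm{SNeu}(i)\Rightarrow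 p\in\mathrm{SNF}(i)$; ($\ell$) $p\in\mathrm{SNF}(i+1)\Rightarrow\lambda\_.p\in\mathrm{SNF}(i)$. A $B$-coloring (resp. $R$-coloring) of a skeleton $p\in\mathrm{SLam}(i)$ is a derivation of $p\in\mathrm{SNeu}(i)$ (resp. $p\in\mathrm{SNF}(i)$); a coloring of a linear term is a coloring of its skeleton. A linear term is neutral if it has a $B$-coloring and normal if it has an $R$-coloring. The size $|\pi|$ of a coloring $\pi$ is the number of uses of rule (s) in $\pi$. *)

theory Defs
  imports Main
begin

datatype skel = Leaf | SApp skel skel | SLam skel

inductive slam :: "nat \<Rightarrow> skel \<Rightarrow> bool" where
  slam_leaf: "slam 1 Leaf"
| slam_app: "slam j p \<Longrightarrow> slam k q \<Longrightarrow> slam (j + k) (SApp p q)"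
| slam_lam: "slam (Suc i) p \<Longrightarrow> slam i (SLam p)"

fun leaves :: "skel \<Rightarrow> nat" where
  "leaves Leaf = 1"
| "leaves (SApp p q) = leaves p + leaves q"
| "leaves (SLam p) = leaves p"

datatype 'v lterm = Var 'v | App "'v lterm" "'v lterm" | Abs 'v "'v lterm"

fun tsize :: "'v lterm \<Rightarrow> nat" where
  "tsize (Var x) = 1"
| "tsize (App t u) = tsize t + tsize u"
| "tsize (Abs x t) = tsize t"

text \<open>[\<Gamma>]t \<in> \<Lambda>_1(p): linear term with free-variable context \<Gamma> decorating skeleton p.\<close>
inductive lin :: "'v list \<Rightarrow> 'v lterm \<Rightarrow> skel \<Rightarrow> bool" where
  lin_var: "lin [x] (Var x) Leaf"
| lin_app: "lin \<Gamma> t p \<Longrightarrow> lin \<Delta> u q \<Longrightarrow> lin (\<Gamma> @ \<Delta>) (App t u) (SApp p q)"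
| lin_abs: "lin (x # \<Gamma>) t p \<Longrightarrow> lin \<Gamma> (Abs x t) (SLam p)"
| lin_exch: "lin (\<Gamma> @ [y, x] @ \<Delta>) t p \<Longrightarrow> lin (\<Gamma> @ [x, y] @ \<Delta>) t p"

datatype deriv = DV | DA deriv deriv | DS deriv | DL deriv

text \<open>sneu \<pi> i p : \<pi> is a derivation of p \<in> SNeu(i) (a B-coloring);
      snf \<pi> i p : \<pi> is a derivation of p \<in> SNF(i) (an R-coloring).\<close>
inductive sneu :: "deriv \<Rightarrow> nat \<Rightarrow> skel \<Rightarrow> bool"
      and snf :: "deriv \<Rightarrow> nat \<Rightarrow> skel \<Rightarrow> bool" where
  rule_v: "sneu DV 1 Leaf"
| rule_a: "sneu \<pi> j p \<Longrightarrow> snf \<rho> k q \<Longrightarrow> sneu (DA \<pi> \<rho>) (j + k) (SApp p q)"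
| rule_s: "sneu \<pi> i p \<Longrightarrow> snf (DS \<pi>) i p"
| rule_l: "snf \<pi> (Suc i) p \<Longrightarrow> snf (DL \<pi>) i (SLam p)"

fun csize :: "deriv \<Rightarrow> nat" where
  "csize DV = 0"
| "csize (DA \<pi> \<rho>) = csize \<pi> + csize \<rho>"
| "csize (DS \<pi>) = Suc (csize \<pi>)"
| "csize (DL \<pi>) = csize \<pi>"

end

theory Submission
  imports Defs
begin

text \<open>Both claims follow by simultaneous induction on the coloring: rule (s) raises the size
  by one and is the only rule that does, so an R-coloring has one use of (s) per leaf, while a
  B-coloring lacks exactly the (s) that would close its head. A linear decoration of a skeleton
  has one variable occurrence per leaf.\<close>

lemma sneu_snf_csize:
  shows sneu_csize: "sneu \<pi> i p \<Longrightarrow> csize \<pi> + 1 = leaves p"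
    and snf_csize: "snf \<pi> i p \<Longrightarrow> csize \<pi> = leaves p"
  by (induction rule: sneu_snf.inducts) auto

lemma lin_tsize_eq_leaves: "lin \<Gamma> t p \<Longrightarrow> tsize t = leaves p"
  by (induction rule: lin.induct) auto

theorem proposition2p11:
  fixes \<Gamma> :: "'v list" and t :: "'v lterm" and p :: skel and \<pi> :: deriv and i :: nat
  shows "(lin \<Gamma> t p \<and> snf \<pi> i p \<longrightarrow> csize \<pi> = leaves p \<and> csize \<pi> = tsize t)
       \<and> (lin \<Gamma> t p \<and> sneu \<pi> i p \<longrightarrow> csize \<pi> = tsize t - 1)"
  using sneu_csize snf_csize lin_tsize_eq_leaves by fastforce

end
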